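(* Let $\mathbf{A}\in\mathbb{R}^{n\times n}$ be a symmetric positive semidefinite matrix, let $\mathbf{s}_0\in[-1,1]^n$ and let $k>0$ be an integer. Consider the problem of maximizing $\mathbf{s}^{\intercal}\mathbf{A}\mathbf{s}$ subject to $\mathbf{s}\in[-1,1]^n$ and $\|\mathbf{s}-\mathbf{s}_0\|_0\le k$. Then there exists an optimal solution $\mathbf{s}$ such that $\mathbf{s}(i)\in\{-1,1\}$ for all entries $i$ with $\mathbf{s}(i)\neq\mathbf{s}_0(i)$. In particular, if $\mathbf{s}_0\in\{-1,1\}^n$ or $k=n$, there exists an optimal solution $\mathbf{s}\in\{-1,1\}^n$.
   Context: $\|\cdot\|_0$ counts nonzero entries; $\mathbf{s}(i)$ is the $i$-th entry of $\mathbf{s}$. *)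

theory Defs
  imports "HOL-Analysis.Analysis"
begin

definition l0 :: "real ^ 'n \<Rightarrow> nat" where
  "l0 x = card {i. x $ i \<noteq> 0}"

definition feasible :: "real ^ 'n \<Rightarrow> nat \<Rightarrow> real ^ 'n \<Rightarrow> bool" where
  "feasible s0 k s \<longleftrightarrow> (\<forall>i. \<bar>s $ i\<bar> \<le> 1) \<and> l0 (s - s0) \<le> k"

definition optimal :: "real ^ 'n ^ 'n \<Rightarrow> real ^ 'n \<Rightarrow> nat \<Rightarrow> real ^ 'n \<Rightarrow> bool" where
  "optimal A s0 k s \<longleftrightarrow> feasible s0 k s \<and>
     (\<forall>t. feasible s0 k t \<longrightarrow> t \<bullet> (A *v t) \<le> s \<bullet> (A *v s))"

end

theory Submission
  imports Defs
begin

text \<open>A positive semidefinite quadratic form is convex, so on every segment parallel to a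
  coordinate axis of the cube it is maximised at an endpoint. Pushing the changed coordinates of
  a feasible point one at a time to \<open>\<plusminus>1\<close> therefore never decreases the objective and
  never changes more coordinates, so the maximum over the finitely many feasible points whose
  changed coordinates are \<open>\<plusminus>1\<close> is the optimum. With the budget \<open>k = n\<close> every
  coordinate may be pushed.\<close>

lemma convex_on_quadratic_form:
  fixes A :: "real ^ 'n ^ 'n"
  assumes psd: "\<forall>x. 0 \<le> x \<bullet> (A *v x)"
  shows "convex_on UNIV (\<lambda>x. x \<bullet> (A *v x))"
proof
  fix t :: real and x y :: "real ^ 'n"
  assume t: "0 < t" "t < 1"
  let ?q = "\<lambda>x. x \<bullet> (A *v x)"
  have "(1 - t) * ?q x + t * ?q y - ?q ((1 - t) *\<^sub>R x + t *\<^sub>R y) = (1 - t) * t * ?q (x - y)"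
    by (simp add: algebra_simps)
  moreover have "0 \<le> (1 - t) * t * ?q (x - y)"
    using t psd by simp
  ultimately show "?q ((1 - t) *\<^sub>R x + t *\<^sub>R y) \<le> (1 - t) * ?q x + t * ?q y"
    by linarith
qed simp

lemma convex_on_coordinate_to_vertex:
  fixes f :: "real ^ 'n \<Rightarrow> real" and t :: "real ^ 'n"
  assumes f: "convex_on UNIV f" and ti: "\<bar>t $ i\<bar> \<le> 1"
  shows "\<exists>c\<in>{-1, 1}. f t \<le> f (\<chi> j. if j = i then c else t $ j)"
proof -
  define up where "up c = (\<chi> j. if j = i then c else t $ j)" for c :: real
  define u where "u = (1 + t $ i) / 2"
  have "t $ j = (u *\<^sub>R up 1 + (1 - u) *\<^sub>R up (-1)) $ j" for j
  proof (cases "j = i")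
    case True
    then show ?thesis
      by (simp add: up_def u_def field_simps)
  next
    case False
    have "t $ j = u * t $ j + (1 - u) * t $ j"
      by (simp add: algebra_simps)
    with False show ?thesis
      by (simp add: up_def)
  qed
  then have t_split: "t = u *\<^sub>R up 1 + (1 - u) *\<^sub>R up (-1)"
    by (simp add: vec_eq_iff)
  have "f (u *\<^sub>R up 1 + (1 - u) *\<^sub>R up (-1)) \<le> max (f (up 1)) (f (up (-1)))"
    by (rule convex_lower[OF f]) (use ti in \<open>auto simp: u_def\<close>)
  then have "f t \<le> max (f (up 1)) (f (up (-1)))"
    by (simp only: t_split [symmetric])
  then show ?thesis
    unfolding up_def by (auto simp: max_def split: if_splits)
qed

lemma convex_on_round_coordinates:
  fixes f :: "real ^ 'n \<Rightarrow> real" and t :: "real ^ 'n" and B :: "'n set"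
  assumes f: "convex_on UNIV f" and t: "\<forall>i. \<bar>t $ i\<bar> \<le> 1"
  shows "\<exists>v. (\<forall>j. j \<notin> B \<longrightarrow> v $ j = t $ j) \<and> (\<forall>j\<in>B. v $ j \<in> {-1, 1}) \<and>
    (\<forall>j. \<bar>v $ j\<bar> \<le> 1) \<and> f t \<le> f v"
  using finite [of B]
proof (induction B rule: finite_induct)
  case empty
  show ?case
    using t by auto
next
  case (insert i B)
  then obtain v where v: "\<forall>j. j \<notin> B \<longrightarrow> v $ j = t $ j" "\<forall>j\<in>B. v $ j \<in> {-1, 1}"
    "\<forall>j. \<bar>v $ j\<bar> \<le> 1" "f t \<le> f v"
    by blast
  obtain c where c: "c \<in> {-1, 1}" "f v \<le> f (\<chi> j. if j = i then c else v $ j)"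
    using convex_on_coordinate_to_vertex[OF f] v(3) by blast
  show ?case
  proof (intro exI conjI)
    show "\<forall>j. j \<notin> insert i B \<longrightarrow> (\<chi> j. if j = i then c else v $ j) $ j = t $ j"
      using v(1) by simp
    show "\<forall>j\<in>insert i B. (\<chi> j. if j = i then c else v $ j) $ j \<in> {-1, 1}"
      using v(2) c(1) by simp
    show "\<forall>j. \<bar>(\<chi> j. if j = i then c else v $ j) $ j\<bar> \<le> 1"
      using v(3) c(1) by auto
    show "f t \<le> f (\<chi> j. if j = i then c else v $ j)"
      using v(4) c(2) by linarith
  qed
qed

lemma feasible_round_changed_coordinates:
  fixes f :: "real ^ 'n \<Rightarrow> real"
  assumes f: "convex_on UNIV f" and t: "feasible s0 k t"
  shows "\<exists>v. feasible s0 k v \<and> (\<forall>i. v $ i \<noteq> s0 $ i \<longrightarrow> v $ i \<in> {-1, 1}) \<and> f t \<le> f v"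
proof -
  define B where "B = {i. t $ i \<noteq> s0 $ i}"
  obtain v where v: "\<forall>j. j \<notin> B \<longrightarrow> v $ j = t $ j" "\<forall>j\<in>B. v $ j \<in> {-1, 1}"
    "\<forall>j. \<bar>v $ j\<bar> \<le> 1" "f t \<le> f v"
    using convex_on_round_coordinates[OF f, of t B] t by (auto simp: feasible_def)
  have "{i. (v - s0) $ i \<noteq> 0} \<subseteq> {i. (t - s0) $ i \<noteq> 0}"
    using v(1) by (auto simp: B_def)
  then have "l0 (v - s0) \<le> l0 (t - s0)"
    unfolding l0_def by (intro card_mono) auto
  with t v show ?thesis
    unfolding feasible_def B_def by (intro exI [of _ v]) auto
qed

lemma finite_changed_coordinates_vertices:
  "finite {v :: real ^ 'n. \<forall>i. v $ i \<noteq> s0 $ i \<longrightarrow> v $ i \<in> {-1, 1}}"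
proof -
  have "{v :: real ^ 'n. \<forall>i. v $ i \<noteq> s0 $ i \<longrightarrow> v $ i \<in> {-1, 1}}
      = vec_nth -` (\<Pi>\<^sub>E i \<in> UNIV. {-1, 1, s0 $ i})"
    by auto
  then show ?thesis
    by (simp add: finite_vimageI finite_PiE inj_def vec_eq_iff)
qed

lemma exists_optimal_changed_coordinates_vertices:
  fixes A :: "real ^ 'n ^ 'n"
  assumes psd: "\<forall>x. 0 \<le> x \<bullet> (A *v x)" and s0: "\<forall>i. \<bar>s0 $ i\<bar> \<le> 1"
  shows "\<exists>s. optimal A s0 k s \<and> (\<forall>i. s $ i \<noteq> s0 $ i \<longrightarrow> s $ i \<in> {-1, 1})"
proof -
  let ?q = "\<lambda>x. x \<bullet> (A *v x)"
  define V where "V = {v. feasible s0 k v \<and> (\<forall>i. v $ i \<noteq> s0 $ i \<longrightarrow> v $ i \<in> {-1, 1})}"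
  have "finite V"
    unfolding V_def by (rule finite_subset [OF _ finite_changed_coordinates_vertices]) auto
  moreover have "s0 \<in> V"
    using s0 by (simp add: V_def feasible_def l0_def)
  ultimately have "Max (?q ` V) \<in> ?q ` V"
    by (intro Max_in) auto
  then obtain s where s: "s \<in> V" "Max (?q ` V) = ?q s"
    by blast
  have s_max: "?q v \<le> ?q s" if "v \<in> V" for v
    unfolding s(2) [symmetric] using \<open>finite V\<close> that by (intro Max_ge) auto
  have "?q t \<le> ?q s" if "feasible s0 k t" for t
    using feasible_round_changed_coordinates[OF convex_on_quadratic_form[OF psd] that] s_max
    unfolding V_def by force
  with s(1) show ?thesis
    unfolding V_def optimal_def by blast
qed

lemma optimal_full_budget_vertex:
  fixes A :: "real ^ 'n ^ 'n"
  assumes psd: "\<forall>x. 0 \<le> x \<bullet> (A *v x)" and s: "optimal A s0 CARD('n) s"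
  shows "\<exists>v. optimal A s0 CARD('n) v \<and> (\<forall>i. v $ i \<in> {-1, 1})"
proof -
  obtain v where v: "\<forall>j. v $ j \<in> {-1, 1}" "\<forall>j. \<bar>v $ j\<bar> \<le> 1"
    "s \<bullet> (A *v s) \<le> v \<bullet> (A *v v)"
    using convex_on_round_coordinates[OF convex_on_quadratic_form[OF psd], of s UNIV] s
    by (auto simp: optimal_def feasible_def)
  have "feasible s0 CARD('n) v"
    using v(2) by (simp add: feasible_def l0_def card_mono)
  with s v show ?thesis
    unfolding optimal_def by force
qed

theorem lemmaB1:
  fixes A :: "real ^ 'n ^ 'n" and s0 :: "real ^ 'n" and k :: nat
  assumes symA: "transpose A = A"
    and psdA: "\<forall>x. 0 \<le> x \<bullet> (A *v x)"
    and s0: "\<forall>i. \<bar>s0 $ i\<bar> \<le> 1"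
    and k: "k > 0"
  shows "(\<exists>s. optimal A s0 k s \<and> (\<forall>i. s $ i \<noteq> s0 $ i \<longrightarrow> s $ i \<in> {-1, 1}))
    \<and> (((\<forall>i. s0 $ i \<in> {-1, 1}) \<or> k = CARD('n)) \<longrightarrow>
         (\<exists>s. optimal A s0 k s \<and> (\<forall>i. s $ i \<in> {-1, 1})))"
proof -
  obtain s where s: "optimal A s0 k s" "\<forall>i. s $ i \<noteq> s0 $ i \<longrightarrow> s $ i \<in> {-1, 1}"
    using exists_optimal_changed_coordinates_vertices[OF psdA s0] by blast
  moreover have "\<exists>s. optimal A s0 k s \<and> (\<forall>i. s $ i \<in> {-1, 1})"
    if "(\<forall>i. s0 $ i \<in> {-1, 1}) \<or> k = CARD('n)"
    using that
  proof
    assume "\<forall>i. s0 $ i \<in> {-1, 1}"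
    with s show ?thesis
      by metis
  next
    assume "k = CARD('n)"
    with s(1) show ?thesis
      using optimal_full_budget_vertex[OF psdA] by blast
  qed
  ultimately show ?thesis
    by blast
qed

end
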